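(* $$\sum_{n\ge0}|\mathfrak S_n(1243,2143,321)|x^n=1+x\frac{1-2x+3x^2}{(1-x)^4},$$ and consequently, for all $n\ge1$, $$|\mathfrak S_n(1243,2143,321)|=\binom{n-1}{0}+\binom{n-1}{1}+2\binom{n-1}{2}+2\binom{n-1}{3}.$$
   Context: $\mathfrak S_n(R)$ is the set of permutations of $\{1,\dots,n\}$ avoiding every pattern in $R$, where $\pi$ avoids $\sigma$ if no subsequence of $\pi$ has the same relative order as $\sigma$. *)

theory Defs
  imports "HOL-Computational_Algebra.Formal_Power_Series"
begin

definition perms :: "nat \<Rightarrow> nat list set" where
  "perms n = {p. distinct p \<and> set p = {1..n}}"

definition contains_pattern :: "nat list \<Rightarrow> nat list \<Rightarrow> bool" where
  "contains_pattern p s \<longleftrightarrow>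
     (\<exists>f. strict_mono_on {..<length s} f \<and> (\<forall>i<length s. f i < length p) \<and>
          (\<forall>i<length s. \<forall>j<length s. s ! i < s ! j \<longleftrightarrow> p ! (f i) < p ! (f j)))"

definition avoids :: "nat list \<Rightarrow> nat list set \<Rightarrow> bool" where
  "avoids p R \<longleftrightarrow> (\<forall>s\<in>R. \<not> contains_pattern p s)"

definition Av :: "nat \<Rightarrow> nat list set \<Rightarrow> nat list set" where
  "Av n R = {p \<in> perms n. avoids p R}"

end

theory Submission
  imports Defs "HOL-Library.Sublist"
begin

(* Split a permutation of {1..n} at its maximum, p = B @ n # A. Since n can only play the
   largest letter of 321, 1243 or 2143, p avoids the three patterns iff B does, A is increasing,
   every inversion (x, y) of B has y below all of A, and no two entries of B lie below a common
   entry of A. If A = [] this just says p = q @ [n] with q in the class. Otherwise, with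
   m = last A, the entries of B above m are m+1, ..., n-1 in increasing order, and B has at most
   one further entry a < m, which is 1 or stands first (else some x > m before a, a, and the
   entry 1 of A form a 321). This leaves the n - 1 rotations m+1 ... n 1 ... m and (n - 2)^2
   permutations with such an entry a, so |S_n| = |S_(n-1)| + (n - 1) + (n - 2)^2, which the
   binomial sum solves. The generating function then follows from
   sum_n C(n,k) x^n = x^k / (1 - x)^(k+1). *)

unbundle fps_syntax

lemma subseq_map_rightD: "subseq xs (map f ys) \<Longrightarrow> \<exists>zs. subseq zs ys \<and> xs = map f zs"
proof (induction ys arbitrary: xs)
  case (Cons y ys)
  show ?case
  proof (cases xs)
    case (Cons x xs')
    show ?thesis
    proof (cases "x = f y")
      case True
      then obtain zs where "subseq zs ys" "xs' = map f zs"
        using Cons.IH[of xs'] Cons.prems \<open>xs = x # xs'\<close> by auto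
      then show ?thesis
        using True \<open>xs = x # xs'\<close> by (intro exI[of _ "y # zs"]) simp
    next
      case False
      then obtain zs where "subseq zs ys" "xs = map f zs"
        using Cons.IH[of xs] Cons.prems \<open>xs = x # xs'\<close> by auto
      then show ?thesis
        by (intro exI[of _ zs]) auto
    qed
  qed auto
qed auto

lemma set_subseq: "subseq xs ys \<Longrightarrow> set xs \<subseteq> set ys"
  by (auto elim: list_emb_set)

lemma distinct_subseq: "subseq xs ys \<Longrightarrow> distinct ys \<Longrightarrow> distinct xs"
  by (induction rule: list_emb.induct) (auto dest: set_subseq)

lemma sorted_wrt_subseq: "subseq xs ys \<Longrightarrow> sorted_wrt R ys \<Longrightarrow> sorted_wrt R xs"
  by (induction rule: list_emb.induct) (auto dest: list_emb_set)

lemma sorted_wrt_iff_subseq: "sorted_wrt R xs \<longleftrightarrow> (\<forall>x y. subseq [x, y] xs \<longrightarrow> R x y)"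
proof (induction xs)
  case (Cons a xs)
  have "subseq [x, y] (a # xs) \<longleftrightarrow> (x = a \<and> y \<in> set xs) \<or> subseq [x, y] xs" for x y
    by (auto simp: subseq_singleton_left dest: subseq_Cons')
  then show ?case
    using Cons.IH by auto
qed simp

lemma sorted_subseq_le: "sorted xs \<Longrightarrow> subseq [x, y] xs \<Longrightarrow> x \<le> y"
  unfolding sorted_wrt_iff_subseq by blast

lemma subseq_pair_cases:
  assumes "x \<in> set xs" "y \<in> set xs" "x \<noteq> y"
  shows "subseq [x, y] xs \<or> subseq [y, x] xs"
  using assms by (induction xs) (auto simp: subseq_singleton_left)

lemma sorted_le_last: "sorted xs \<Longrightarrow> x \<in> set xs \<Longrightarrow> x \<le> last xs"
  by (induction xs) (auto simp: last_in_set)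

lemma set_take_Cons_drop: "set (take t xs @ a # drop t xs) = insert a (set xs)"
  by (metis append_take_drop_id set_append Un_insert_right list.set(2))

lemma distinct_take_Cons_drop:
  "distinct (take t xs @ a # drop t xs) \<longleftrightarrow> distinct xs \<and> a \<notin> set xs"
proof -
  have "distinct (ys @ a # zs) \<longleftrightarrow> distinct (ys @ zs) \<and> a \<notin> set (ys @ zs)" for ys zs :: "'a list"
    by auto
  from this[of "take t xs" "drop t xs"] show ?thesis
    by simp
qed

lemma inversion_of_inserted_min:
  fixes V :: "'a::linorder list"
  assumes "sorted_wrt (<) V" "\<forall>v\<in>set V. a < v"
    and inv: "subseq [x, y] (take t V @ a # drop t V)" "y < x"
  shows "y = a \<and> t \<noteq> 0"
proof -
  have a_notin: "a \<notin> set V"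
    using assms(2) by auto
  have "y = a"
  proof (rule ccontr)
    assume "y \<noteq> a"
    moreover have "y \<in> insert a (set V)"
      using set_subseq[OF inv(1)] set_take_Cons_drop by fastforce
    ultimately have "x \<noteq> a"
      using assms(2) inv(2) by auto
    have "filter (\<lambda>v. v \<noteq> a) (take t V @ a # drop t V) = V"
      using a_notin by (metis (mono_tags, lifting) append_take_drop_id filter_True filter.simps(2) filter_append)
    then have "subseq [x, y] V"
      using subseq_filter[OF inv(1), of "\<lambda>v. v \<noteq> a"] \<open>x \<noteq> a\<close> \<open>y \<noteq> a\<close> by simp
    then show False
      using assms(1) inv(2) unfolding sorted_wrt_iff_subseq by (meson less_asym)
  qed
  moreover have "t \<noteq> 0"
  proof
    assume "t = 0"
    then have "subseq [x, a] (a # V)"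
      using inv(1) \<open>y = a\<close> by simp
    then have "a \<in> set V"
      by (auto simp: subseq_singleton_left split: if_splits dest: set_subseq)
    then show False
      using a_notin by simp
  qed
  ultimately show ?thesis ..
qed

lemma list3_eq_append_conv:
  "[x, y, z] = xs @ ys \<longleftrightarrow>
     xs = [x, y, z] \<and> ys = [] \<or> xs = [x, y] \<and> ys = [z] \<or> xs = [x] \<and> ys = [y, z] \<or>
     xs = [] \<and> ys = [x, y, z]"
  by (auto simp: Cons_eq_append_conv)

lemma list4_eq_append_conv:
  "[a, b, c, d] = xs @ ys \<longleftrightarrow>
     xs = [a, b, c, d] \<and> ys = [] \<or> xs = [a, b, c] \<and> ys = [d] \<or> xs = [a, b] \<and> ys = [c, d] \<or>
     xs = [a] \<and> ys = [b, c, d] \<or> xs = [] \<and> ys = [a, b, c, d]"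
  by (auto simp: Cons_eq_append_conv)

section \<open>Pattern containment via subsequences\<close>

lemma contains_pattern_iff_subseq:
  "contains_pattern p s \<longleftrightarrow>
     (\<exists>q. subseq q p \<and> length q = length s \<and>
          (\<forall>i<length s. \<forall>j<length s. s ! i < s ! j \<longleftrightarrow> q ! i < q ! j))"
proof
  assume "contains_pattern p s"
  then obtain f where f: "strict_mono_on {..<length s} f" "\<forall>i<length s. f i < length p"
    and iso: "\<forall>i<length s. \<forall>j<length s. s ! i < s ! j \<longleftrightarrow> p ! f i < p ! f j"
    unfolding contains_pattern_def by blast
  define idx where "idx = map f [0..<length s]"
  have "sorted_wrt (<) idx"
    using f(1) by (auto simp: idx_def sorted_wrt_iff_nth_less strict_mono_on_def)
  moreover have "set idx \<subseteq> set [0..<length p]"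
    using f(2) by (auto simp: idx_def)
  ultimately have "subseq idx [0..<length p]"
    by (intro sorted_subset_imp_subseq) (auto simp: sorted_wrt_mono_rel)
  then have "subseq (map ((!) p) idx) p"
    by (metis map_nth subseq_map)
  then show "\<exists>q. subseq q p \<and> length q = length s \<and>
               (\<forall>i<length s. \<forall>j<length s. s ! i < s ! j \<longleftrightarrow> q ! i < q ! j)"
    using iso by (intro exI[of _ "map ((!) p) idx"]) (simp add: idx_def)
next
  assume "\<exists>q. subseq q p \<and> length q = length s \<and>
            (\<forall>i<length s. \<forall>j<length s. s ! i < s ! j \<longleftrightarrow> q ! i < q ! j)"
  then obtain q where q: "subseq q p" "length q = length s"
    and iso: "\<forall>i<length s. \<forall>j<length s. s ! i < s ! j \<longleftrightarrow> q ! i < q ! j"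
    by blast
  obtain idx where idx: "subseq idx [0..<length p]" "q = map ((!) p) idx"
    using subseq_map_rightD[of q "(!) p" "[0..<length p]"] q(1) by (auto simp: map_nth)
  have "sorted_wrt (<) idx"
    using sorted_wrt_subseq[OF idx(1)] by simp
  then have "strict_mono_on {..<length s} ((!) idx)"
    using q(2) idx(2) by (auto simp: sorted_wrt_iff_nth_less strict_mono_on_def)
  moreover have "\<forall>i<length s. idx ! i < length p"
    using set_subseq[OF idx(1)] q(2) idx(2) nth_mem[of _ idx] by fastforce
  ultimately show "contains_pattern p s"
    unfolding contains_pattern_def using iso q(2) idx(2) by auto
qed

definition has_321 :: "nat list \<Rightarrow> bool" where
  "has_321 p \<longleftrightarrow> (\<exists>x y z. subseq [x, y, z] p \<and> z < y \<and> y < x)"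

definition has_1243_2143 :: "nat list \<Rightarrow> bool" where
  "has_1243_2143 p \<longleftrightarrow> (\<exists>a b c d. subseq [a, b, c, d] p \<and> a < d \<and> b < d \<and> d < c)"

definition in_class :: "nat list \<Rightarrow> bool" where
  "in_class p \<longleftrightarrow> \<not> has_321 p \<and> \<not> has_1243_2143 p"

lemma contains_321_iff: "contains_pattern p [3, 2, 1] \<longleftrightarrow> has_321 p"
  unfolding contains_pattern_iff_subseq has_321_def
  by (auto simp: length_Suc_conv numeral_eq_Suc All_less_Suc2) blast

lemma contains_1243_iff:
  "contains_pattern p [1, 2, 4, 3] \<longleftrightarrow>
     (\<exists>a b c d. subseq [a, b, c, d] p \<and> a < b \<and> b < d \<and> d < c)"
  unfolding contains_pattern_iff_subseq
  by (auto simp: length_Suc_conv numeral_eq_Suc All_less_Suc2) blast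

lemma contains_2143_iff:
  "contains_pattern p [2, 1, 4, 3] \<longleftrightarrow>
     (\<exists>a b c d. subseq [a, b, c, d] p \<and> b < a \<and> a < d \<and> d < c)"
  unfolding contains_pattern_iff_subseq
  by (auto simp: length_Suc_conv numeral_eq_Suc All_less_Suc2) blast

lemma avoids_iff_in_class:
  assumes "distinct p"
  shows "avoids p {[1, 2, 4, 3], [2, 1, 4, 3], [3, 2, 1]} \<longleftrightarrow> in_class p"
proof -
  have "contains_pattern p [1, 2, 4, 3] \<or> contains_pattern p [2, 1, 4, 3] \<longleftrightarrow> has_1243_2143 p"
  proof
    assume "has_1243_2143 p"
    then obtain a b c d where abcd: "subseq [a, b, c, d] p" "a < d" "b < d" "d < c"
      unfolding has_1243_2143_def by blast
    have "a \<noteq> b"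
      using distinct_subseq[OF abcd(1) assms] by simp
    then show "contains_pattern p [1, 2, 4, 3] \<or> contains_pattern p [2, 1, 4, 3]"
      unfolding contains_1243_iff contains_2143_iff using abcd linorder_neqE_nat by blast
  next
    assume "contains_pattern p [1, 2, 4, 3] \<or> contains_pattern p [2, 1, 4, 3]"
    then show "has_1243_2143 p"
      unfolding contains_1243_iff contains_2143_iff has_1243_2143_def using less_trans by blast
  qed
  then show ?thesis
    unfolding avoids_def in_class_def by (simp only: ball_simps contains_321_iff) blast
qed

lemma has_321_mono: "has_321 q \<Longrightarrow> subseq q p \<Longrightarrow> has_321 p"
  unfolding has_321_def by (meson subseq_order.order_trans)

lemma has_1243_2143_mono: "has_1243_2143 q \<Longrightarrow> subseq q p \<Longrightarrow> has_1243_2143 p"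
  unfolding has_1243_2143_def by (meson subseq_order.order_trans)

lemma in_class_if_inversions_end_at_min:
  assumes "\<And>x y. subseq [x, y] p \<Longrightarrow> y < x \<Longrightarrow> \<forall>z\<in>set p. y \<le> z"
  shows "in_class p"
proof -
  have "\<not> has_321 p"
  proof
    assume "has_321 p"
    then obtain x y z where xyz: "subseq [x, y, z] p" "z < y" "y < x"
      unfolding has_321_def by blast
    have "subseq [x, y] p"
      by (rule subseq_order.order_trans[OF _ xyz(1)]) simp
    moreover have "z \<in> set p"
      using set_subseq[OF xyz(1)] by simp
    ultimately show False
      using assms[of x y] xyz by fastforce
  qed
  moreover have "\<not> has_1243_2143 p"
  proof
    assume "has_1243_2143 p"
    then obtain a b c d where abcd: "subseq [a, b, c, d] p" "a < d" "b < d" "d < c"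
      unfolding has_1243_2143_def by blast
    have "subseq [c, d] p"
      by (rule subseq_order.order_trans[OF _ abcd(1)]) simp
    moreover have "a \<in> set p"
      using set_subseq[OF abcd(1)] by simp
    ultimately show False
      using assms[of c d] abcd by fastforce
  qed
  ultimately show ?thesis
    unfolding in_class_def by blast
qed

lemma in_class_if_sorted: "sorted_wrt (<) p \<Longrightarrow> in_class p"
  by (rule in_class_if_inversions_end_at_min) (auto simp: sorted_wrt_iff_subseq dest: less_asym)

section \<open>Splitting a permutation at its maximum\<close>

lemma has_321_append_maxD:
  assumes "\<forall>x\<in>set B \<union> set A. x < n" "has_321 (B @ n # A)"
  shows "has_321 B \<or> \<not> sorted A \<or> (\<exists>x y z. subseq [x, y] B \<and> z \<in> set A \<and> z < y \<and> y < x)"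
    (is ?rhs)
proof -
  from assms(2) obtain x y z where xyz: "subseq [x, y, z] (B @ n # A)" "z < y" "y < x"
    unfolding has_321_def by blast
  have "x \<in> set (B @ n # A)"
    using set_subseq[OF xyz(1)] by simp
  then have "x \<le> n"
    using assms by (auto intro: less_imp_le)
  from xyz(1) obtain xs ys where split: "[x, y, z] = xs @ ys" "subseq xs B" "subseq ys (n # A)"
    by (rule subseq_appendE)
  from split(1) show ?rhs
    unfolding list3_eq_append_conv
  proof (elim disjE conjE)
    assume "xs = [x, y, z]"
    then show ?rhs using split(2) xyz unfolding has_321_def by blast
  next
    assume "xs = [x, y]" "ys = [z]"
    moreover have "x < n" using split(2) \<open>xs = [x, y]\<close> assms set_subseq by fastforce
    ultimately show ?rhs using split xyz by (auto simp: subseq_singleton_left)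
  next
    assume "xs = [x]" "ys = [y, z]"
    moreover have "x < n" using split(2) \<open>xs = [x]\<close> assms set_subseq by fastforce
    ultimately have "subseq [y, z] A" using split(3) xyz by simp
    then show ?rhs using xyz sorted_subseq_le by fastforce
  next
    assume "xs = []" "ys = [x, y, z]"
    then have "subseq [y, z] A" using split(3) xyz \<open>x \<le> n\<close> by (auto dest: subseq_Cons' split: if_splits)
    then show ?rhs using xyz sorted_subseq_le by fastforce
  qed
qed

lemma has_321_append_max:
  assumes "\<forall>x\<in>set B \<union> set A. x < n"
  shows "has_321 (B @ n # A) \<longleftrightarrow>
           has_321 B \<or> \<not> sorted A \<or> (\<exists>x y z. subseq [x, y] B \<and> z \<in> set A \<and> z < y \<and> y < x)"
    (is "_ \<longleftrightarrow> ?rhs")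
proof
  assume ?rhs
  then consider "has_321 B" | y z where "subseq [y, z] A" "z < y"
    | x y z where "subseq [x, y] B" "z \<in> set A" "z < y" "y < x"
    unfolding sorted_wrt_iff_subseq by (auto simp: not_le)
  then show "has_321 (B @ n # A)"
  proof cases
    case 1
    then show ?thesis by (rule has_321_mono) (simp add: prefix_imp_subseq)
  next
    case (2 y z)
    then have "subseq [n, y, z] (B @ n # A)" by (simp add: subseq_drop_many)
    moreover have "y < n" using 2 assms set_subseq by fastforce
    ultimately show ?thesis using 2 unfolding has_321_def by blast
  next
    case (3 x y z)
    then have "subseq ([x, y] @ [z]) (B @ n # A)"
      by (intro list_emb_append_mono) (auto simp: subseq_singleton_left)
    then show ?thesis using 3 unfolding has_321_def by auto
  qed
qed (rule has_321_append_maxD[OF assms])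

lemma has_1243_2143_append_maxD:
  assumes "\<forall>x\<in>set B \<union> set A. x < n" "sorted A" "has_1243_2143 (B @ n # A)"
  shows "has_1243_2143 B \<or> (\<exists>a b d. subseq [a, b] B \<and> d \<in> set A \<and> a < d \<and> b < d)"
    (is ?rhs)
proof -
  from assms(3) obtain a b c d where abcd: "subseq [a, b, c, d] (B @ n # A)" "a < d" "b < d" "d < c"
    unfolding has_1243_2143_def by blast
  have "c \<in> set (B @ n # A)"
    using set_subseq[OF abcd(1)] by simp
  then have "c \<le> n"
    using assms(1) by (auto intro: less_imp_le)
  have no_desc: False if "subseq [c, d] A"
    using sorted_subseq_le[OF assms(2) that] abcd by simp
  from abcd(1) obtain xs ys where split: "[a, b, c, d] = xs @ ys" "subseq xs B" "subseq ys (n # A)"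
    by (rule subseq_appendE)
  from split(1) show ?rhs
    unfolding list4_eq_append_conv
  proof (elim disjE conjE)
    assume "xs = [a, b, c, d]"
    then show ?rhs using split(2) abcd unfolding has_1243_2143_def by blast
  next
    assume "xs = [a, b, c]" "ys = [d]"
    moreover have "c < n" using split(2) \<open>xs = [a, b, c]\<close> assms set_subseq by fastforce
    moreover have "subseq [a, b] B"
      using split(2) \<open>xs = [a, b, c]\<close> subseq_order.order_trans[of "[a, b]" "[a, b, c]"] by simp
    ultimately show ?rhs using split abcd by (auto simp: subseq_singleton_left)
  next
    assume "xs = [a, b]" "ys = [c, d]"
    then show ?rhs using split abcd no_desc by (auto simp: subseq_singleton_left split: if_splits)
  next
    assume "xs = [a]" "ys = [b, c, d]"
    then show ?rhs using split(3) abcd no_desc \<open>c \<le> n\<close> by (auto dest: subseq_Cons' split: if_splits)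
  next
    assume "xs = []" "ys = [a, b, c, d]"
    then show ?rhs using split(3) abcd no_desc \<open>c \<le> n\<close> by (auto dest: subseq_Cons' split: if_splits)
  qed
qed

lemma has_1243_2143_append_max:
  assumes "\<forall>x\<in>set B \<union> set A. x < n" "sorted A"
  shows "has_1243_2143 (B @ n # A) \<longleftrightarrow>
           has_1243_2143 B \<or> (\<exists>a b d. subseq [a, b] B \<and> d \<in> set A \<and> a < d \<and> b < d)"
    (is "_ \<longleftrightarrow> ?rhs")
proof
  assume ?rhs
  then consider "has_1243_2143 B" | a b d where "subseq [a, b] B" "d \<in> set A" "a < d" "b < d"
    by blast
  then show "has_1243_2143 (B @ n # A)"
  proof cases
    case 1
    then show ?thesis by (rule has_1243_2143_mono) (simp add: prefix_imp_subseq)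
  next
    case (2 a b d)
    then have "subseq ([a, b] @ [n, d]) (B @ n # A)"
      by (intro list_emb_append_mono) (auto simp: subseq_singleton_left)
    moreover have "d < n" using 2 assms by auto
    ultimately show ?thesis using 2 unfolding has_1243_2143_def by auto
  qed
qed (rule has_1243_2143_append_maxD[OF assms])

lemma in_class_append_max_iff:
  assumes "\<forall>x\<in>set B \<union> set A. x < n"
  shows "in_class (B @ n # A) \<longleftrightarrow> in_class B \<and> sorted A \<and>
           \<not> (\<exists>x y z. subseq [x, y] B \<and> z \<in> set A \<and> z < y \<and> y < x) \<and>
           \<not> (\<exists>a b d. subseq [a, b] B \<and> d \<in> set A \<and> a < d \<and> b < d)"
proof (cases "sorted A")
  case True
  then show ?thesis
    unfolding in_class_def has_321_append_max[OF assms] has_1243_2143_append_max[OF assms True]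
    by blast
next
  case False
  then show ?thesis
    unfolding in_class_def has_321_append_max[OF assms] by blast
qed

lemma in_class_snoc_max_iff: "\<forall>x\<in>set q. x < n \<Longrightarrow> in_class (q @ [n]) \<longleftrightarrow> in_class q"
  using in_class_append_max_iff[of q "[]" n] by simp

lemma perms_iff: "p \<in> perms n \<longleftrightarrow> distinct p \<and> set p = {1..n}"
  unfolding perms_def by simp

lemma perms_length: "p \<in> perms n \<Longrightarrow> length p = n"
  unfolding perms_iff using distinct_card by fastforce

lemma finite_perms: "finite (perms n)"
proof (rule finite_subset)
  show "perms n \<subseteq> {xs. set xs \<subseteq> {1..n} \<and> length xs = n}"
    using perms_length unfolding perms_def by auto
qed (rule finite_lists_length_eq, simp)

lemma perms_0: "perms 0 = {[]}"
  unfolding perms_def by auto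

lemma snoc_in_perms: "q \<in> perms n \<Longrightarrow> q @ [Suc n] \<in> perms (Suc n)"
  unfolding perms_iff by auto

lemma butlast_in_perms:
  assumes "p \<in> perms (Suc n)" "last p = Suc n"
  shows "butlast p \<in> perms n" "p = butlast p @ [Suc n]"
proof -
  have "p \<noteq> []"
    using assms(1) unfolding perms_iff by auto
  then show p: "p = butlast p @ [Suc n]"
    using append_butlast_last_id assms(2) by metis
  with assms(1) have "distinct (butlast p @ [Suc n])" "set (butlast p @ [Suc n]) = {1..Suc n}"
    unfolding perms_iff by simp_all
  then have "distinct (butlast p)" "set (butlast p) = {1..Suc n} - {Suc n}"
    by auto
  moreover have "{1..Suc n} - {Suc n} = {1..n}"
    by auto
  ultimately show "butlast p \<in> perms n"
    unfolding perms_iff by simp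
qed

definition class_perms :: "nat \<Rightarrow> nat list set" where
  "class_perms n = {p \<in> perms n. in_class p}"

definition class_perms_last_ne :: "nat \<Rightarrow> nat list set" where
  "class_perms_last_ne n = {p \<in> class_perms n. last p \<noteq> n}"

lemma Av_eq_class_perms: "Av n {[1, 2, 4, 3], [2, 1, 4, 3], [3, 2, 1]} = class_perms n"
  unfolding Av_def class_perms_def using avoids_iff_in_class by (auto simp: perms_iff)

lemma class_perms_0: "class_perms 0 = {[]}"
  unfolding class_perms_def perms_0 using in_class_if_sorted[of "[]"] by auto

section \<open>Members of the class that do not end with their maximum\<close>

definition rotation :: "nat \<Rightarrow> nat \<Rightarrow> nat list" where
  "rotation n m = [Suc m..<n] @ n # [1..<Suc m]"

definition small_prefix :: "nat \<Rightarrow> nat \<Rightarrow> nat \<Rightarrow> nat \<Rightarrow> nat list" where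
  "small_prefix n m a t = take t [Suc m..<n] @ a # drop t [Suc m..<n]"

definition insert_small :: "nat \<Rightarrow> nat \<Rightarrow> nat \<Rightarrow> nat \<Rightarrow> nat list" where
  "insert_small n m a t = small_prefix n m a t @ n # filter (\<lambda>x. x \<noteq> a) [1..<Suc m]"

(* m is the last entry, a < m the entry before n that is below m, and t its position. *)
definition small_params :: "nat \<Rightarrow> (nat \<times> nat \<times> nat) set" where
  "small_params n = {(m, a, t). 1 \<le> a \<and> a < m \<and> m < n \<and> t < n - m \<and> (a = 1 \<or> t = 0)}"

lemma last_rotation: "1 \<le> m \<Longrightarrow> last (rotation n m) = m"
  by (simp add: rotation_def)

lemma last_insert_small: "a < m \<Longrightarrow> last (insert_small n m a t) = m"
  by (simp add: insert_small_def)

lemma set_small_prefix: "set (small_prefix n m a t) = insert a {Suc m..<n}"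
  unfolding small_prefix_def set_take_Cons_drop by simp

lemma distinct_small_prefix: "a \<le> m \<Longrightarrow> distinct (small_prefix n m a t)"
  unfolding small_prefix_def distinct_take_Cons_drop by simp

lemma inversion_small_prefix:
  assumes "(m, a, t) \<in> small_params n" "subseq [x, y] (small_prefix n m a t)" "y < x"
  shows "y = 1"
  using inversion_of_inserted_min[of "[Suc m..<n]" a x y t] assms
  unfolding small_params_def small_prefix_def by auto

lemma rotation_in_class_perms_last_ne:
  assumes "1 \<le> m" "m < n"
  shows "rotation n m \<in> class_perms_last_ne n"
proof -
  have below: "\<forall>x\<in>set [Suc m..<n] \<union> set [1..<Suc m]. x < n"
    using assms by auto
  have "\<not> (\<exists>x y z. subseq [x, y] [Suc m..<n] \<and> z \<in> set [1..<Suc m] \<and> z < y \<and> y < x)"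
    using sorted_wrt_upt[of "Suc m" n] unfolding sorted_wrt_iff_subseq by (meson less_asym)
  moreover have "\<not> (\<exists>a b d. subseq [a, b] [Suc m..<n] \<and> d \<in> set [1..<Suc m] \<and> a < d \<and> b < d)"
    using set_subseq[of "[_, _]" "[Suc m..<n]"] by fastforce
  ultimately have "in_class (rotation n m)"
    unfolding rotation_def in_class_append_max_iff[OF below]
    using in_class_if_sorted sorted_wrt_upt sorted_upt by blast
  moreover have "rotation n m \<in> perms n"
    using assms unfolding perms_iff rotation_def by auto
  ultimately show ?thesis
    using assms last_rotation unfolding class_perms_last_ne_def class_perms_def by simp
qed

lemma insert_small_in_perms:
  assumes "(m, a, t) \<in> small_params n"
  shows "insert_small n m a t \<in> perms n"
proof -
  have a: "1 \<le> a" "a < m" "m < n"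
    using assms unfolding small_params_def by auto
  define A where "A = filter (\<lambda>x. x \<noteq> a) [1..<Suc m]"
  have set_A: "set A = {1..m} - {a}"
    unfolding A_def by auto
  have "distinct (small_prefix n m a t)" "distinct A"
    using a(2) distinct_small_prefix unfolding A_def by simp_all
  moreover have "n \<notin> set (small_prefix n m a t)" "n \<notin> set A" "set (small_prefix n m a t) \<inter> set A = {}"
    using set_small_prefix set_A a(2,3) by auto
  ultimately have "distinct (small_prefix n m a t @ n # A)"
    by simp
  moreover have "set (small_prefix n m a t @ n # A) = {1..n}"
    using a unfolding set_append list.set(2) set_small_prefix set_A by auto
  ultimately show ?thesis
    unfolding perms_iff insert_small_def A_def[symmetric] by blast
qed

lemma in_class_insert_small:
  assumes "(m, a, t) \<in> small_params n"
  shows "in_class (insert_small n m a t)"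
proof -
  have a: "1 \<le> a" "a < m" "m < n"
    using assms unfolding small_params_def by auto
  define B where "B = small_prefix n m a t"
  define A where "A = filter (\<lambda>x. x \<noteq> a) [1..<Suc m]"
  have set_B: "set B = insert a {Suc m..<n}" and "distinct B"
    using a(2) set_small_prefix distinct_small_prefix unfolding B_def by simp_all
  have set_A: "set A = {1..m} - {a}"
    unfolding A_def by auto
  have inversion_at_1: "y = 1" if "subseq [x, y] B" "y < x" for x y
    using inversion_small_prefix[OF assms] that unfolding B_def .
  have "in_class B"
  proof (rule in_class_if_inversions_end_at_min)
    fix x y assume "subseq [x, y] B" "y < x"
    then have "y = 1"
      by (rule inversion_at_1)
    then show "\<forall>z\<in>set B. y \<le> z"
      using set_B a(1) by auto
  qed
  moreover have "sorted A"
    unfolding A_def by (rule sorted_wrt_filter) (rule sorted_upt)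
  moreover have "\<not> (\<exists>x y z. subseq [x, y] B \<and> z \<in> set A \<and> z < y \<and> y < x)"
    using inversion_at_1 set_A by (metis DiffD1 atLeastAtMost_iff not_le)
  moreover have "\<not> (\<exists>x y d. subseq [x, y] B \<and> d \<in> set A \<and> x < d \<and> y < d)"
  proof
    assume "\<exists>x y d. subseq [x, y] B \<and> d \<in> set A \<and> x < d \<and> y < d"
    then obtain x y d where xy: "subseq [x, y] B" "d \<in> set A" "x < d" "y < d"
      by blast
    have "x = a" "y = a"
      using set_subseq[OF xy(1)] xy set_B set_A by auto
    then show False
      using distinct_subseq[OF xy(1) \<open>distinct B\<close>] by simp
  qed
  moreover have below: "\<forall>x\<in>set B \<union> set A. x < n"
    using set_B set_A a(2,3) by auto
  ultimately show ?thesis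
    unfolding insert_small_def B_def[symmetric] A_def[symmetric] in_class_append_max_iff[OF below]
    by blast
qed

lemma insert_small_in_class_perms_last_ne:
  assumes "(m, a, t) \<in> small_params n"
  shows "insert_small n m a t \<in> class_perms_last_ne n"
  using insert_small_in_perms[OF assms] in_class_insert_small[OF assms] last_insert_small[of a m n t]
    assms unfolding class_perms_last_ne_def class_perms_def small_params_def by auto

locale split_at_max =
  fixes n m :: nat and B A :: "nat list"
  assumes perm: "B @ n # A \<in> perms n"
    and avoiding: "in_class (B @ n # A)"
    and A_ne: "A \<noteq> []"
    and last_A: "last A = m"
begin

lemma distinct: "distinct (B @ n # A)"
  and set_eq: "set (B @ n # A) = {1..n}"
  using perm unfolding perms_iff by auto

lemma below_max: "\<forall>x\<in>set B \<union> set A. x < n"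
  using distinct set_eq by fastforce

lemma positive: "x \<in> set B \<union> set A \<Longrightarrow> 1 \<le> x"
  using set_eq by auto

lemma class_conditions:
  "sorted A"
  "\<not> (\<exists>x y z. subseq [x, y] B \<and> z \<in> set A \<and> z < y \<and> y < x)"
  "\<not> (\<exists>a b d. subseq [a, b] B \<and> d \<in> set A \<and> a < d \<and> b < d)"
  using avoiding unfolding in_class_append_max_iff[OF below_max] by blast+

lemma m_in_A: "m \<in> set A"
  using A_ne last_A by auto

lemma A_le_m: "z \<in> set A \<Longrightarrow> z \<le> m"
  using sorted_le_last class_conditions(1) last_A by blast

lemma m_bounds: "1 \<le> m" "m < n"
  using m_in_A set_eq below_max by auto

lemma m_notin_B: "m \<notin> set B"
  using distinct m_in_A by auto

lemma below_m_unique: "x \<in> set B \<Longrightarrow> y \<in> set B \<Longrightarrow> x < m \<Longrightarrow> y < m \<Longrightarrow> x = y"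
  using subseq_pair_cases[of x B y] class_conditions(3) m_in_A by blast

lemma inversion_le_A: "subseq [x, y] B \<Longrightarrow> y < x \<Longrightarrow> z \<in> set A \<Longrightarrow> y \<le> z"
  using class_conditions(2) by fastforce

lemma filter_above_m: "filter (\<lambda>x. m < x) B = [Suc m..<n]"
proof (rule strict_sorted_equal)
  show "sorted_wrt (<) (filter (\<lambda>x. m < x) B)"
    unfolding sorted_wrt_iff_subseq
  proof (intro allI impI)
    fix x y assume sub: "subseq [x, y] (filter (\<lambda>x. m < x) B)"
    then have "subseq [x, y] B"
      using subseq_order.order_trans subseq_filter_left by blast
    moreover have "m < y"
      using set_subseq[OF sub] by auto
    moreover have "x \<noteq> y"
      using distinct_subseq[OF sub] distinct by simp
    ultimately show "x < y"
      using inversion_le_A[of x y m] m_in_A by fastforce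
  qed
  show "set (filter (\<lambda>x. m < x) B) = set [Suc m..<n]"
    using set_eq below_max A_le_m by fastforce
qed simp

lemma A_eq_filter: "A = filter (\<lambda>x. x \<notin> set B) [1..<Suc m]"
proof (rule strict_sorted_equal)
  show "sorted_wrt (<) A"
    using class_conditions(1) distinct by (simp add: strict_sorted_iff)
  show "set A = set (filter (\<lambda>x. x \<notin> set B) [1..<Suc m])"
  proof (intro equalityI subsetI)
    fix x assume "x \<in> set A"
    then show "x \<in> set (filter (\<lambda>x. x \<notin> set B) [1..<Suc m])"
      using positive[of x] A_le_m[of x] distinct by (auto simp del: upt_Suc)
  next
    fix x assume "x \<in> set (filter (\<lambda>x. x \<notin> set B) [1..<Suc m])"
    then have "x \<in> set (B @ n # A)" "x \<noteq> n" "x \<notin> set B"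
      using set_eq m_bounds by (auto simp del: upt_Suc)
    then show "x \<in> set A"
      by simp
  qed
qed (rule sorted_wrt_filter, rule sorted_wrt_upt)

lemma small_entry_first_unless_1:
  assumes "B = B1 @ a # B2" "a < m"
  shows "a = 1 \<or> B1 = []"
proof (rule ccontr)
  assume "\<not> (a = 1 \<or> B1 = [])"
  then obtain x where "x \<in> set B1"
    by (metis list.set_intros(1) neq_Nil_conv)
  then have "subseq ([x] @ [a]) B"
    unfolding assms(1) by (intro list_emb_append_mono) (auto simp: subseq_singleton_left)
  moreover have "m < x"
    using \<open>x \<in> set B1\<close> below_m_unique[of x a] distinct m_notin_B assms by fastforce
  then have "a < x"
    using assms(2) by (rule less_trans[rotated])
  moreover have "1 \<in> set A"
  proof -
    have "a \<in> set B" "1 < a"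
      using assms positive[of a] \<open>\<not> (a = 1 \<or> B1 = [])\<close> by auto
    then have "1 \<notin> set B"
      using below_m_unique[of 1 a] assms(2) by auto
    then show ?thesis
      using \<open>1 < a\<close> assms(2) by (subst A_eq_filter) (simp del: upt_Suc)
  qed
  ultimately show False
    using inversion_le_A[of x a 1] \<open>\<not> (a = 1 \<or> B1 = [])\<close> positive[of a] assms(1) by simp
qed

lemma rotation_case:
  assumes "\<forall>x\<in>set B. m < x"
  shows "B @ n # A = rotation n m"
proof -
  have "B = [Suc m..<n]"
    using filter_above_m assms by simp
  moreover have "A = [1..<Suc m]"
    using assms by (subst A_eq_filter) (rule filter_True, auto simp del: upt_Suc)
  ultimately show ?thesis
    unfolding rotation_def by simp
qed

lemma insert_small_case:
  assumes "a \<in> set B" "a < m"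
  shows "\<exists>t. (m, a, t) \<in> small_params n \<and> B @ n # A = insert_small n m a t"
proof -
  obtain B1 B2 where B: "B = B1 @ a # B2"
    using split_list[OF assms(1)] by blast
  have "\<forall>x\<in>set (B1 @ B2). m < x"
    using below_m_unique[of _ a] assms distinct m_notin_B unfolding B by fastforce
  then have "B1 @ B2 = [Suc m..<n]"
    using filter_above_m assms(2) unfolding B by simp
  define t where "t = length B1"
  have B1: "B1 = take t [Suc m..<n]" and B2: "B2 = drop t [Suc m..<n]"
    using \<open>B1 @ B2 = [Suc m..<n]\<close> unfolding t_def by (metis append_eq_conv_conj)+
  have "x \<in> set B \<longleftrightarrow> x = a" if "x \<in> set [1..<Suc m]" for x
  proof
    assume "x \<in> set B"
    moreover from this have "x \<noteq> m"
      using m_notin_B by auto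
    ultimately show "x = a"
      using that below_m_unique[of x a] assms by (auto simp del: upt_Suc)
  qed (use assms(1) in simp)
  then have "A = filter (\<lambda>x. x \<noteq> a) [1..<Suc m]"
    by (subst A_eq_filter) (rule filter_cong[OF refl], blast)
  moreover have "a = 1 \<or> t = 0"
    using small_entry_first_unless_1[OF B assms(2)] unfolding t_def by simp
  moreover have "1 \<le> a"
    using positive assms(1) by simp
  moreover have "t \<le> length [Suc m..<n]"
    using \<open>B1 @ B2 = [Suc m..<n]\<close> unfolding t_def by (metis length_append le_add1)
  then have "t < n - m"
    using m_bounds by simp
  ultimately show ?thesis
    using m_bounds assms(2) unfolding small_params_def insert_small_def small_prefix_def B B1 B2 by auto
qed

end

(* The hypothesis 0 < n is needed because last [] is unspecified. *)
lemma class_perms_last_ne_subset: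
  assumes "p \<in> class_perms_last_ne n" "0 < n"
  shows "p \<in> rotation n ` {1..<n} \<union> (\<lambda>(m, a, t). insert_small n m a t) ` small_params n"
proof -
  have p: "p \<in> perms n" "in_class p" "last p \<noteq> n"
    using assms(1) unfolding class_perms_last_ne_def class_perms_def by auto
  then have "n \<in> set p"
    using assms(2) unfolding perms_iff by auto
  then obtain B A where B_A: "p = B @ n # A"
    using split_list by metis
  with p(3) have "A \<noteq> []" by auto
  then interpret split_at_max n "last A" B A
    using p B_A by unfold_locales auto
  show ?thesis
  proof (cases "\<forall>x\<in>set B. last A < x")
    case True
    then show ?thesis
      using rotation_case m_bounds B_A by auto
  next
    case False
    then obtain a where "a \<in> set B" "a < last A"
      using m_notin_B by (metis linorder_neqE_nat)
    then obtain t where "(last A, a, t) \<in> small_params n" "p = insert_small n (last A) a t"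
      using insert_small_case B_A by blast
    then show ?thesis
      by force
  qed
qed

lemma class_perms_last_ne_eq:
  assumes "0 < n"
  shows "class_perms_last_ne n =
           rotation n ` {1..<n} \<union> (\<lambda>(m, a, t). insert_small n m a t) ` small_params n"
proof (intro equalityI subsetI)
  fix p assume "p \<in> class_perms_last_ne n"
  then show "p \<in> rotation n ` {1..<n} \<union> (\<lambda>(m, a, t). insert_small n m a t) ` small_params n"
    using assms by (rule class_perms_last_ne_subset)
next
  fix p assume "p \<in> rotation n ` {1..<n} \<union> (\<lambda>(m, a, t). insert_small n m a t) ` small_params n"
  then consider m where "1 \<le> m" "m < n" "p = rotation n m"
    | m a t where "(m, a, t) \<in> small_params n" "p = insert_small n m a t"
    by auto
  then show "p \<in> class_perms_last_ne n"
    by cases (simp_all add: rotation_in_class_perms_last_ne insert_small_in_class_perms_last_ne)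
qed

section \<open>Counting\<close>

lemma inj_on_rotation: "inj_on (rotation n) {1..<n}"
  by (rule inj_on_inverseI[of _ last]) (simp add: last_rotation)

lemma inj_on_insert_small: "inj_on (\<lambda>(m, a, t). insert_small n m a t) (small_params n)"
proof (rule inj_onI, clarsimp)
  fix m a t m' a' t'
  assume params: "(m, a, t) \<in> small_params n" "(m', a', t') \<in> small_params n"
    and eq: "insert_small n m a t = insert_small n m' a' t'"
  have "m' = m"
    using arg_cong[OF eq, of last] params by (simp add: small_params_def last_insert_small)
  have "a < m" "m < n"
    using params(1) by (auto simp: small_params_def)
  define V where "V = [Suc m..<n]"
  have "take t V @ a # drop t V = take t' V @ a' # drop t' V"
    using eq \<open>a < m\<close> \<open>m < n\<close> unfolding insert_small_def small_prefix_def \<open>m' = m\<close> V_def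
    by (subst (asm) append_Cons_eq_iff) (auto dest: in_set_takeD in_set_dropD)
  moreover have "a \<notin> set V" "a' \<notin> set V"
    using params \<open>m' = m\<close> by (auto simp: V_def small_params_def)
  ultimately have "a' = a"
    by (metis Un_iff append_take_drop_id list.set_intros(1) set_ConsD set_append)
  then have "take t V @ a # drop t V = take t' V @ a # drop t' V"
    using \<open>take t V @ a # drop t V = _\<close> by simp
  then have "take t V = take t' V"
    using \<open>a \<notin> set V\<close>
    by (subst (asm) append_Cons_eq_iff) (auto dest: in_set_takeD in_set_dropD)
  moreover have "t \<le> length V" "t' \<le> length V"
    using params \<open>m' = m\<close> by (auto simp: V_def small_params_def)
  ultimately have "t' = t"
    by (metis length_take min.absorb2)
  then show "m = m' \<and> a = a' \<and> t = t'"
    using \<open>m' = m\<close> \<open>a' = a\<close> by simp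
qed

lemma rotation_ne_insert_small:
  assumes "(m, a, t) \<in> small_params n"
  shows "rotation n m' \<noteq> insert_small n m a t"
proof
  assume eq: "rotation n m' = insert_small n m a t"
  show False
  proof (cases "1 \<le> m'")
    case True
    then have "m' = m"
      using arg_cong[OF eq, of last] assms by (simp add: small_params_def last_insert_small last_rotation)
    moreover have "a < m" "m < n"
      using assms by (auto simp: small_params_def)
    ultimately have "[Suc m..<n] = take t [Suc m..<n] @ a # drop t [Suc m..<n]"
      using eq unfolding insert_small_def small_prefix_def rotation_def
      by (subst (asm) append_Cons_eq_iff) (auto dest: in_set_takeD in_set_dropD)
    then show False
      by (metis length_append length_Cons append_take_drop_id add_Suc_right n_not_Suc_n)
  next
    case False
    then have "n \<in> set (rotation n m')" "last (rotation n m') = n"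
      by (simp_all add: rotation_def)
    then show False
      using eq assms last_insert_small[of a m n t] by (auto simp: small_params_def)
  qed
qed

lemma finite_small_params: "finite (small_params n)"
  by (rule finite_subset[of _ "{..<n} \<times> {..<n} \<times> {..<n}"]) (auto simp: small_params_def)

lemma card_small_params: "card (small_params n) = (n - 2)\<^sup>2"
proof -
  have "small_params n = (SIGMA m:{2..<n}. {1} \<times> {..<n - m} \<union> {2..<m} \<times> {0})"
    unfolding small_params_def by auto
  moreover have "card ({1} \<times> {..<n - m} \<union> {2..<m} \<times> {0::nat}) = n - 2"
    if "m \<in> {2..<n}" for m
    using that by (subst card_Un_disjoint) auto
  ultimately show ?thesis
    by (simp add: card_SigmaI power2_eq_square)
qed

lemma card_class_perms_last_ne:
  assumes "0 < n"
  shows "card (class_perms_last_ne n) = (n - 1) + (n - 2)\<^sup>2"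
proof -
  have disjoint: "rotation n ` {1..<n} \<inter> (\<lambda>(m, a, t). insert_small n m a t) ` small_params n = {}"
    using rotation_ne_insert_small by fastforce
  have "card (class_perms_last_ne n) =
      card (rotation n ` {1..<n}) + card ((\<lambda>(m, a, t). insert_small n m a t) ` small_params n)"
    unfolding class_perms_last_ne_eq[OF assms]
    by (rule card_Un_disjoint[OF _ _ disjoint]) (simp_all add: finite_small_params)
  also have "\<dots> = (n - 1) + (n - 2)\<^sup>2"
    by (simp only: card_image[OF inj_on_rotation] card_image[OF inj_on_insert_small]
        card_small_params card_atLeastLessThan)
  finally show ?thesis .
qed

lemma class_perms_Suc:
  "class_perms (Suc n) = (\<lambda>q. q @ [Suc n]) ` class_perms n \<union> class_perms_last_ne (Suc n)"
proof (intro equalityI subsetI)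
  fix p assume p: "p \<in> class_perms (Suc n)"
  show "p \<in> (\<lambda>q. q @ [Suc n]) ` class_perms n \<union> class_perms_last_ne (Suc n)"
  proof (cases "last p = Suc n")
    case True
    then have "butlast p \<in> perms n" "p = butlast p @ [Suc n]"
      using p butlast_in_perms unfolding class_perms_def by auto
    moreover have "in_class (butlast p)"
      using p \<open>p = _\<close> in_class_snoc_max_iff[of "butlast p" "Suc n"] \<open>butlast p \<in> perms n\<close>
      unfolding class_perms_def perms_iff by (metis atLeastAtMost_iff le_imp_less_Suc mem_Collect_eq)
    ultimately show ?thesis
      unfolding class_perms_def by (metis (mono_tags, lifting) UnI1 image_eqI mem_Collect_eq)
  next
    case False
    then show ?thesis
      using p unfolding class_perms_last_ne_def by simp
  qed
next
  fix p assume "p \<in> (\<lambda>q. q @ [Suc n]) ` class_perms n \<union> class_perms_last_ne (Suc n)"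
  then show "p \<in> class_perms (Suc n)"
  proof
    assume "p \<in> (\<lambda>q. q @ [Suc n]) ` class_perms n"
    then obtain q where "q \<in> perms n" "in_class q" "p = q @ [Suc n]"
      unfolding class_perms_def by auto
    moreover have "\<forall>x\<in>set q. x < Suc n"
      using \<open>q \<in> perms n\<close> unfolding perms_iff by auto
    ultimately show ?thesis
      unfolding class_perms_def using snoc_in_perms in_class_snoc_max_iff by simp
  qed (simp add: class_perms_last_ne_def)
qed

lemma card_class_perms_Suc: "card (class_perms (Suc n)) = card (class_perms n) + n + (n - 1)\<^sup>2"
proof -
  have "finite (class_perms n)" for n
    using finite_perms unfolding class_perms_def by simp
  moreover have "(\<lambda>q. q @ [Suc n]) ` class_perms n \<inter> class_perms_last_ne (Suc n) = {}"
    unfolding class_perms_last_ne_def by auto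
  moreover have "finite (class_perms_last_ne (Suc n))"
    using calculation(1) unfolding class_perms_last_ne_def by simp
  ultimately have "card (class_perms (Suc n)) =
      card ((\<lambda>q. q @ [Suc n]) ` class_perms n) + card (class_perms_last_ne (Suc n))"
    unfolding class_perms_Suc by (intro card_Un_disjoint) auto
  also have "\<dots> = card (class_perms n) + n + (n - 1)\<^sup>2"
    by (simp add: card_image inj_on_def card_class_perms_last_ne)
  finally show ?thesis .
qed

lemma card_class_perms:
  "card (class_perms (Suc j)) = (j choose 0) + (j choose 1) + 2 * (j choose 2) + 2 * (j choose 3)"
proof (induction j)
  case 0
  show ?case
    using card_class_perms_Suc[of 0] by (simp add: class_perms_0)
next
  case (Suc j)
  have "2 * (j choose 2) + j = j * j"
    by (induction j) (auto simp: numeral_2_eq_2)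
  then show ?case
    using Suc.IH card_class_perms_Suc[of "Suc j"]
    by (simp add: numeral_2_eq_2 numeral_3_eq_3 power2_eq_square)
qed

section \<open>The generating function\<close>

lemma one_minus_fps_X_mult:
  "(1 - fps_X) * Abs_fps f = Abs_fps (\<lambda>n. f n - (if n = 0 then 0 else f (n - 1)))"
  for f :: "nat \<Rightarrow> 'a::comm_ring_1"
  by (simp add: fps_eq_iff algebra_simps)

lemma fps_binomial_column:
  "Abs_fps (\<lambda>n. of_nat (n choose k)) * (1 - fps_X) ^ Suc k = (fps_X ^ k :: 'a::comm_ring_1 fps)"
proof (induction k)
  case 0
  show ?case
    by (simp add: mult.commute[of _ "1 - fps_X"] one_minus_fps_X_mult fps_eq_iff)
next
  case (Suc k)
  have "(1 - fps_X) * Abs_fps (\<lambda>n. of_nat (n choose Suc k)) =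
        (fps_X * Abs_fps (\<lambda>n. of_nat (n choose k)) :: 'a fps)"
    by (auto simp: one_minus_fps_X_mult fps_eq_iff gr0_conv_Suc)
  then show ?case
    using Suc.IH by (metis (no_types, lifting) mult.assoc mult.commute power_Suc)
qed

lemma generating_function_of_binomial_sum:
  fixes a :: "nat \<Rightarrow> nat"
  assumes a0: "a 0 = 1"
    and a_Suc: "\<And>j. a (Suc j) = (j choose 0) + (j choose 1) + 2 * (j choose 2) + 2 * (j choose 3)"
  shows "Abs_fps (\<lambda>n. of_nat (a n)) =
           (1 + fps_X * (1 - 2 * fps_X + 3 * fps_X ^ 2) / (1 - fps_X) ^ 4 :: 'f::field fps)"
proof -
  define b :: "nat \<Rightarrow> 'f fps" where "b k = Abs_fps (\<lambda>n. of_nat (n choose k))" for k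
  define S where "S = Abs_fps (\<lambda>n. of_nat (a (Suc n)) :: 'f)"
  have "Abs_fps (\<lambda>n. of_nat (a n)) = 1 + fps_X * S"
    by (auto simp: fps_eq_iff S_def a0 gr0_conv_Suc)
  have S_eq: "S = b 0 + b 1 + 2 * b 2 + 2 * b 3"
    by (simp add: fps_eq_iff S_def b_def a_Suc numeral_fps_const)
  have column: "b k * (1 - fps_X) ^ Suc k = fps_X ^ k" for k
    unfolding b_def by (rule fps_binomial_column)
  have "S * (1 - fps_X) ^ 4 =
      b 0 * (1 - fps_X) * (1 - fps_X) ^ 3 + b 1 * (1 - fps_X) ^ 2 * (1 - fps_X) ^ 2
      + 2 * (b 2 * (1 - fps_X) ^ 3) * (1 - fps_X) + 2 * (b 3 * (1 - fps_X) ^ 4)"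
    unfolding S_eq by algebra
  also have "\<dots> = (1 - fps_X) ^ 3 + fps_X * (1 - fps_X) ^ 2 + 2 * fps_X ^ 2 * (1 - fps_X) + 2 * fps_X ^ 3"
    using column[of 0] column[of 1] column[of 2] column[of 3] by (simp add: power2_eq_square)
  also have "\<dots> = 1 - 2 * fps_X + 3 * fps_X ^ 2"
    by (simp add: algebra_simps power2_eq_square power3_eq_cube)
  finally have S_times: "S * (1 - fps_X) ^ 4 = 1 - 2 * fps_X + 3 * fps_X ^ 2" .
  have unit: "((1 - fps_X) ^ 4 :: 'f fps) $ 0 \<noteq> 0"
    by simp
  have "S = (1 - 2 * fps_X + 3 * fps_X ^ 2) * inverse ((1 - fps_X) ^ 4)"
    using inverse_mult_eq_1'[OF unit] unfolding S_times[symmetric] by (simp add: mult.assoc)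
  then show ?thesis
    unfolding \<open>Abs_fps (\<lambda>n. of_nat (a n)) = 1 + fps_X * S\<close> fps_divide_unit[OF unit]
    by (simp add: mult.assoc)
qed

theorem mainTheorem14:
  shows "Abs_fps (\<lambda>n. of_nat (card (Av n {[1,2,4,3],[2,1,4,3],[3,2,1]}))) =
           (1 + fps_X * (1 - 2 * fps_X + 3 * fps_X ^ 2) / (1 - fps_X) ^ 4 :: rat fps)
         \<and> (\<forall>n\<ge>1. card (Av n {[1,2,4,3],[2,1,4,3],[3,2,1]}) =
              (n - 1 choose 0) + (n - 1 choose 1) + 2 * (n - 1 choose 2) + 2 * (n - 1 choose 3))"
proof
  show "Abs_fps (\<lambda>n. of_nat (card (Av n {[1,2,4,3],[2,1,4,3],[3,2,1]}))) =
          (1 + fps_X * (1 - 2 * fps_X + 3 * fps_X ^ 2) / (1 - fps_X) ^ 4 :: rat fps)"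
    unfolding Av_eq_class_perms
    by (rule generating_function_of_binomial_sum) (simp_all add: class_perms_0 card_class_perms)
  show "\<forall>n\<ge>1. card (Av n {[1,2,4,3],[2,1,4,3],[3,2,1]}) =
          (n - 1 choose 0) + (n - 1 choose 1) + 2 * (n - 1 choose 2) + 2 * (n - 1 choose 3)"
    unfolding Av_eq_class_perms using card_class_perms by (metis Suc_diff_1 less_eq_Suc_le One_nat_def)
qed

end
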